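(* Let $A$ be a commutative nilpotent $\mathbb{F}_p$-algebra of finite dimension, with $A^e\neq0$ and $A^{e+1}=0$ for some $e\ge1$. With $N_t$, $q_t$, $s(\cdot)$, $i(\cdot)$ and $\delta(m)=\lfloor m^2/4\rfloor$ as defined below, \[ i(A)\le \sum_{t=1}^{e-1}\bigl(p^{-\delta(q_t)}-p^{-\delta(q_{t+1})}\bigr)s(N_t)+p^{-\delta(q_e)}s(N_e), \] where $i(A)$ is the number of ideals of $A$.
   Context: Algebras are commutative, associative, not necessarily unital. $N_k=\{a\in A: x_1\cdots x_k a=0\ \forall x_1,\dots,x_k\in A\}$ (so $N_0=0$, $N_e=A$). For $x\in A$, $q(x)=\dim_{\mathbb{F}_p}(\mathbb{F}_px+Ax)$ and $q_t=\min_{x\in N_t\setminus N_{t-1}}q(x)$. For a subspace $J$, $s(J)$ is the number of $\mathbb{F}_p$-subspaces of $J$. *)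

theory Defs
  imports Main "HOL.Real" "HOL-Computational_Algebra.Primes"
begin

text \<open>The algebra A is the whole (finite) type 'a, a commutative, associative,
not necessarily unital ring (class comm_ring). An F_p-algebra structure is
equivalent to the additive group having exponent p; F_p-subspaces are then
exactly additive subgroups.\<close>

definition char_exp :: "nat \<Rightarrow> 'a::comm_ring itself \<Rightarrow> bool" where
  "char_exp p _ \<longleftrightarrow> (\<forall>x::'a. (\<Sum>i<p. x) = 0)"

definition nprod :: "'a::comm_ring \<Rightarrow> 'a list \<Rightarrow> 'a" where
  "nprod x xs = foldr (*) xs x"

definition Nset :: "nat \<Rightarrow> 'a::comm_ring set" where
  "Nset k = {a. \<forall>xs. length xs = k \<longrightarrow> nprod a xs = 0}"

definition subspace :: "'a::comm_ring set \<Rightarrow> bool" where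
  "subspace S \<longleftrightarrow> 0 \<in> S \<and> (\<forall>x\<in>S. \<forall>y\<in>S. x + y \<in> S) \<and> (\<forall>x\<in>S. - x \<in> S)"

definition is_ideal :: "'a::comm_ring set \<Rightarrow> bool" where
  "is_ideal I \<longleftrightarrow> subspace I \<and> (\<forall>a. \<forall>x\<in>I. a * x \<in> I)"

text \<open>Subspace spanned by B (= additive subgroup generated, since char p).\<close>
inductive_set span :: "'a::comm_ring set \<Rightarrow> 'a set" for B where
  span_zero: "0 \<in> span B"
| span_base: "b \<in> B \<Longrightarrow> b \<in> span B"
| span_add: "x \<in> span B \<Longrightarrow> y \<in> span B \<Longrightarrow> x + y \<in> span B"
| span_neg: "x \<in> span B \<Longrightarrow> - x \<in> span B"

definition fdim :: "'a::comm_ring set \<Rightarrow> nat" where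
  "fdim S = (LEAST n. \<exists>B. finite B \<and> card B = n \<and> B \<subseteq> S \<and> span B = S)"

definition qdim :: "'a::comm_ring \<Rightarrow> nat" where
  "qdim x = fdim (span (insert x (range (\<lambda>a. a * x))))"

definition qmin :: "nat \<Rightarrow> 'a::comm_ring itself \<Rightarrow> nat" where
  "qmin t _ = Min (qdim ` (Nset t - Nset (t - 1) :: 'a set))"

definition num_sub :: "'a::comm_ring set \<Rightarrow> nat" where
  "num_sub J = card {S. S \<subseteq> J \<and> subspace S}"

definition num_ideals :: "'a::comm_ring itself \<Rightarrow> nat" where
  "num_ideals _ = card {I :: 'a set. is_ideal I}"

definition delta :: "nat \<Rightarrow> nat" where
  "delta m = m^2 div 4"

end

theory Submission
  imports Defs "HOL-Number_Theory.Cong"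
begin

text \<open>
  Sort the nonzero ideals into layers: \<open>I\<close> lies in layer \<open>t\<close> if \<open>I \<subseteq> N\<^sub>t\<close> but not \<open>I \<subseteq> N\<^sub>t\<^sub>-\<^sub>1\<close>,
  and likewise for subspaces. For \<open>I\<close> in layer \<open>t\<close> pick \<open>x \<in> I - N\<^sub>t\<^sub>-\<^sub>1\<close> and let
  \<open>W = F\<^sub>p x + Ax \<supseteq> H = Ax\<close>; by nilpotency \<open>x \<notin> H\<close>, so \<open>H\<close> is a hyperplane of \<open>W\<close>. With a fixed
  complement \<open>R\<close> of \<open>W\<close> in \<open>I\<close>, every subspace \<open>S \<subseteq> W\<close> not contained in \<open>H\<close> yields a subspace
  \<open>S + R\<close> of layer \<open>t\<close> generating \<open>I\<close> as an ideal, and distinct \<open>S\<close> give distinct \<open>S + R\<close>.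
  If \<open>dim W = m\<close>, the complements in \<open>W\<close> of a subspace \<open>Y \<subseteq> H\<close> of dimension \<open>\<lfloor>m/2\<rfloor>\<close> are
  such subspaces, and there are \<open>p\<^bsup>\<delta>(m)\<^esup> \<ge> p\<^bsup>\<delta>(q\<^sub>t)\<^esup>\<close> of them. Hence each layer contains at
  most \<open>p\<^bsup>-\<delta>(q\<^sub>t)\<^esup>\<close> times as many ideals as subspaces, and summation by parts gives the
  bound, using \<open>\<delta>(q\<^sub>1) = 0\<close> (witnessed by a nonzero element of \<open>A\<^sup>e\<^sup>-\<^sup>1\<close>).
\<close>

section \<open>Subspaces over \<open>F\<^sub>p\<close>\<close>

text \<open>Without a unit there is no \<open>of_nat\<close>, so the \<open>F\<^sub>p\<close>-action is written as repeated addition.\<close>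
fun nsmul :: "nat \<Rightarrow> 'a::comm_ring \<Rightarrow> 'a" where
  "nsmul 0 x = 0"
| "nsmul (Suc n) x = x + nsmul n x"

lemma nsmul_add_left: "nsmul (m + n) x = nsmul m x + nsmul n x"
  by (induction m) (auto simp: algebra_simps)

lemma nsmul_mult: "nsmul (m * n) x = nsmul m (nsmul n x)"
  by (induction m) (auto simp: nsmul_add_left)

lemma nsmul_add_right: "nsmul n (x + y) = nsmul n x + nsmul n y"
  by (induction n) (auto simp: algebra_simps)

lemma nsmul_mult_left: "nsmul n a * x = nsmul n (a * x)"
  by (induction n) (auto simp: algebra_simps)

lemma nsmul_zero [simp]: "nsmul n 0 = 0"
  by (induction n) auto

lemma sum_const_lessThan_eq_nsmul: "(\<Sum>i<n. x) = nsmul n x"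
  by (induction n) (auto simp: algebra_simps)

lemma subspace_0: "subspace S \<Longrightarrow> 0 \<in> S"
  by (simp add: subspace_def)

lemma subspace_add: "subspace S \<Longrightarrow> x \<in> S \<Longrightarrow> y \<in> S \<Longrightarrow> x + y \<in> S"
  by (simp add: subspace_def)

lemma subspace_neg: "subspace S \<Longrightarrow> x \<in> S \<Longrightarrow> - x \<in> S"
  by (simp add: subspace_def)

lemma subspace_diff: "subspace S \<Longrightarrow> x \<in> S \<Longrightarrow> y \<in> S \<Longrightarrow> x - y \<in> S"
  by (metis diff_conv_add_uminus subspace_add subspace_neg)

lemma subspace_nsmul: "subspace S \<Longrightarrow> x \<in> S \<Longrightarrow> nsmul n x \<in> S"
  by (induction n) (auto simp: subspace_0 subspace_add)

lemma subspace_zero: "subspace {0}"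
  by (simp add: subspace_def)

lemma subspace_span: "subspace (span B)"
  by (auto simp: subspace_def intro: span.intros)

lemma span_least: "B \<subseteq> S \<Longrightarrow> subspace S \<Longrightarrow> span B \<subseteq> S"
proof
  fix x assume "x \<in> span B" "B \<subseteq> S" "subspace S"
  then show "x \<in> S" by (induction rule: span.induct) (auto simp: subspace_def)
qed

lemma span_superset: "B \<subseteq> span B"
  by (auto intro: span.intros)

lemma span_mono: "B \<subseteq> C \<Longrightarrow> span B \<subseteq> span C"
  by (meson order.trans span_least span_superset subspace_span)

definition ssum :: "'a::comm_ring set \<Rightarrow> 'a set \<Rightarrow> 'a set" where
  "ssum X Y = {a + b | a b. a \<in> X \<and> b \<in> Y}"

lemma subspace_ssum:
  assumes "subspace X" "subspace Y"
  shows "subspace (ssum X Y)"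
  unfolding subspace_def ssum_def
proof (intro conjI ballI)
  show "0 \<in> {a + b |a b. a \<in> X \<and> b \<in> Y}"
    using assms by (force intro: subspace_0)
next
  fix x y assume "x \<in> {a + b |a b. a \<in> X \<and> b \<in> Y}" "y \<in> {a + b |a b. a \<in> X \<and> b \<in> Y}"
  then obtain a b c d where "x = a + b" "y = c + d" "a \<in> X" "b \<in> Y" "c \<in> X" "d \<in> Y"
    by blast
  then have "x + y = (a + c) + (b + d)" "a + c \<in> X" "b + d \<in> Y"
    using assms by (auto simp: algebra_simps subspace_add)
  then show "x + y \<in> {a + b |a b. a \<in> X \<and> b \<in> Y}" by blast
next
  fix x assume "x \<in> {a + b |a b. a \<in> X \<and> b \<in> Y}"
  then obtain a b where "x = a + b" "a \<in> X" "b \<in> Y" by blast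
  then have "- x = - a + - b" "- a \<in> X" "- b \<in> Y"
    using assms by (auto simp: subspace_neg)
  then show "- x \<in> {a + b |a b. a \<in> X \<and> b \<in> Y}" by blast
qed

lemma ssum_subset: "X \<subseteq> S \<Longrightarrow> Y \<subseteq> S \<Longrightarrow> subspace S \<Longrightarrow> ssum X Y \<subseteq> S"
  by (auto simp: ssum_def intro!: subspace_add)

lemma ssum_upper1: "subspace Y \<Longrightarrow> X \<subseteq> ssum X Y"
  by (force simp: ssum_def subspace_0)

lemma ssum_upper2: "subspace X \<Longrightarrow> Y \<subseteq> ssum X Y"
  by (force simp: ssum_def subspace_0)

lemma ssum_mono1: "X \<subseteq> X' \<Longrightarrow> ssum X Y \<subseteq> ssum X' Y"
  by (auto simp: ssum_def)

lemma ssum_Int_eq: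
  assumes "subspace R" "subspace W" "S \<subseteq> W" "R \<inter> W = {0}"
  shows "ssum S R \<inter> W = S"
proof
  show "S \<subseteq> ssum S R \<inter> W" using assms ssum_upper1 by blast
  show "ssum S R \<inter> W \<subseteq> S"
  proof
    fix z assume "z \<in> ssum S R \<inter> W"
    then obtain s r where sr: "z = s + r" "s \<in> S" "r \<in> R" "z \<in> W"
      unfolding ssum_def by blast
    then have "r \<in> R \<inter> W" using assms subspace_diff[of W z s] by (auto simp: algebra_simps)
    then show "z \<in> S" using sr assms by auto
  qed
qed

definition complements :: "'a::comm_ring set \<Rightarrow> 'a set \<Rightarrow> 'a set set" where
  "complements W Y = {C. subspace C \<and> C \<subseteq> W \<and> C \<inter> Y = {0} \<and> ssum C Y = W}"

lemma delta_eq: "delta m = m div 2 * (m - m div 2)"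
proof (cases "even m")
  case True
  then obtain k where "m = 2 * k" by blast
  then show ?thesis by (simp add: delta_def power2_eq_square)
next
  case False
  then obtain k where "m = 2 * k + 1" using oddE by blast
  moreover have "(2 * k + 1) ^ 2 = 4 * (k * (k + 1)) + 1" by (simp add: power2_eq_square algebra_simps)
  ultimately show ?thesis by (simp add: delta_def)
qed

lemma delta_mono: "a \<le> b \<Longrightarrow> delta a \<le> delta b"
  unfolding delta_def by (intro div_le_mono power_mono) auto

locale fp_ring =
  fixes p :: nat and ty :: "'a::{comm_ring,finite} itself"
  assumes prime: "prime p"
    and nsmul_char: "\<And>x::'a. nsmul p x = 0"
begin

lemma p_gt1: "1 < p"
  using prime prime_gt_1_nat by blast

lemma nsmul_mod: "nsmul n (x::'a) = nsmul (n mod p) x"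
proof -
  have "nsmul n x = nsmul (n div p * p + n mod p) x" by simp
  also have "\<dots> = nsmul (n mod p) x"
    by (simp only: nsmul_add_left nsmul_mult nsmul_char nsmul_zero add_0)
  finally show ?thesis .
qed

lemma nsmul_inverse:
  assumes "c mod p \<noteq> 0"
  obtains k where "\<And>x::'a. nsmul k (nsmul c x) = x"
proof -
  have "coprime c p"
    using assms prime by (metis dvd_eq_mod_eq_0 prime_imp_coprime_nat coprime_commute)
  then obtain k where "[c * k = Suc 0] (mod p)" using cong_solve_coprime_nat by blast
  then have "(k * c) mod p = Suc 0" using p_gt1 by (simp add: cong_def mult.commute)
  then have "nsmul k (nsmul c x) = x" for x :: 'a
    by (metis nsmul_mult nsmul_mod nsmul.simps add_0_right One_nat_def)
  then show ?thesis using that by blast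
qed

lemma neg_nsmul: "- nsmul c (x::'a) = nsmul (p - c mod p) x"
proof -
  have "nsmul (p - c mod p) x + nsmul c x = nsmul (p - c mod p + c mod p) x"
    by (metis nsmul_add_left nsmul_mod)
  also have "\<dots> = 0" using p_gt1 by (simp add: nsmul_char)
  finally show ?thesis by (metis add_eq_0_iff2 add.commute)
qed

lemma subspace_nsmul_cancel:
  assumes "subspace S" "nsmul c (x::'a) \<in> S" "c mod p \<noteq> 0"
  shows "x \<in> S"
  using nsmul_inverse[OF assms(3)] subspace_nsmul[OF assms(1,2)] by metis

lemma span_insert_eq_image:
  assumes X: "subspace (X::'a set)"
  shows "span (insert u X) = (\<lambda>(v, c). v + nsmul c u) ` (X \<times> {..<p})" (is "_ = ?L")
proof
  have L: "subspace ?L"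
    unfolding subspace_def
  proof (intro conjI ballI)
    show "0 \<in> ?L" using subspace_0[OF X] p_gt1
      by (auto intro!: image_eqI[where x="(0, 0)"])
  next
    fix x y assume "x \<in> ?L" "y \<in> ?L"
    then obtain a c b d where "x = a + nsmul c u" "y = b + nsmul d u" "a \<in> X" "b \<in> X"
      by auto
    then have "x + y = (a + b) + nsmul ((c + d) mod p) u" "a + b \<in> X" "(c + d) mod p < p"
      using X p_gt1 by (auto simp: subspace_add nsmul_add_left algebra_simps nsmul_mod[symmetric])
    then show "x + y \<in> ?L" by auto
  next
    fix x assume "x \<in> ?L"
    then obtain a c where "x = a + nsmul c u" "a \<in> X" by auto
    then have "- x = - a + nsmul ((p - c mod p) mod p) u" "- a \<in> X" "(p - c mod p) mod p < p"
      using X p_gt1 by (auto simp: subspace_neg neg_nsmul nsmul_mod[symmetric])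
    then show "- x \<in> ?L"
      by (intro image_eqI[where x="(- a, (p - c mod p) mod p)"]) auto
  qed
  have "u \<in> ?L"
    using subspace_0[OF X] p_gt1 by (auto intro!: image_eqI[where x="(0, 1)"])
  moreover have "v \<in> ?L" if "v \<in> X" for v
    using that p_gt1 by (auto intro!: image_eqI[where x="(v, 0)"])
  ultimately have "insert u X \<subseteq> ?L" by blast
  then show "span (insert u X) \<subseteq> ?L" by (rule span_least[OF _ L])
next
  have "v + nsmul c u \<in> span (insert u X)" if "v \<in> X" for v c
    using that by (blast intro: span.span_add span.span_base subspace_nsmul[OF subspace_span])
  then show "?L \<subseteq> span (insert u X)" by auto
qed

lemma inj_on_add_nsmul:
  assumes X: "subspace (X::'a set)" and u: "u \<notin> X"
  shows "inj_on (\<lambda>(v, c). v + nsmul c u) (X \<times> {..<p})"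
proof -
  have key: "c = d" if "a \<in> X" "b \<in> X" "d < p" "a + nsmul c u = b + nsmul d u" "c \<le> d"
    for a b :: 'a and c d
  proof (rule ccontr)
    assume "c \<noteq> d"
    then have "(d - c) mod p \<noteq> 0" using that by auto
    moreover have "nsmul (d - c) u = a - b"
      using that(4,5) nsmul_add_left[of c "d - c" u] by (simp add: algebra_simps)
    then have "nsmul (d - c) u \<in> X" using subspace_diff[OF X that(1,2)] by simp
    ultimately show False using subspace_nsmul_cancel[OF X] u by blast
  qed
  then show ?thesis
  proof (intro inj_onI, clarify)
    fix a c b d assume "a \<in> X" "b \<in> X" "c < p" "d < p" "a + nsmul c u = b + nsmul d u"
    then have "c = d" using key[of a b d c] key[of b a c d] by (cases "c \<le> d") auto
    then show "a = b \<and> c = d" using \<open>a + nsmul c u = b + nsmul d u\<close> by simp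
  qed
qed

lemma card_span_insert:
  assumes "subspace (X::'a set)" "u \<notin> X"
  shows "card (span (insert u X)) = p * card X"
  using card_image[OF inj_on_add_nsmul[OF assms]]
  by (simp add: span_insert_eq_image[OF assms(1)] card_cartesian_product)

lemma span_insert_Int_eq:
  assumes C: "subspace (C::'a set)" and V: "subspace V" and CV: "C \<subseteq> V" and z: "z \<notin> V"
  shows "span (insert z C) \<inter> V = C"
proof
  show "span (insert z C) \<inter> V \<subseteq> C"
  proof
    fix v assume v: "v \<in> span (insert z C) \<inter> V"
    then obtain w c where wc: "v = w + nsmul c z" "w \<in> C" "c < p"
      unfolding span_insert_eq_image[OF C] by auto
    have "nsmul c z \<in> V" using subspace_diff[OF V, of v w] v wc CV by auto
    then have "c = 0" using subspace_nsmul_cancel[OF V] z wc(3) by fastforce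
    then show "v \<in> C" using wc by simp
  qed
qed (use CV span_superset in blast)

lemma hyperplane_between:
  assumes Y: "subspace (Y::'a set)" and W: "subspace W" and YW: "Y \<subseteq> W" "Y \<noteq> W"
  obtains W' u where "subspace W'" "Y \<subseteq> W'" "W' \<subseteq> W" "u \<in> W" "u \<notin> W'"
    "span (insert u W') = W"
proof -
  let ?P = "{Z. subspace Z \<and> Y \<subseteq> Z \<and> Z \<subseteq> W \<and> Z \<noteq> W}"
  have "finite ?P" by (rule finite_subset[OF subset_UNIV]) simp
  moreover have "?P \<noteq> {}" using Y YW by blast
  ultimately obtain W' where W': "W' \<in> ?P" and max: "\<forall>Z\<in>?P. W' \<subseteq> Z \<longrightarrow> W' = Z"
    using finite_has_maximal[of ?P] by (auto simp only: Bex_def)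
  then have W'W: "subspace W'" "Y \<subseteq> W'" "W' \<subseteq> W" "W' \<noteq> W" by auto
  then obtain u where u: "u \<in> W" "u \<notin> W'" by blast
  have "span (insert u W') \<subseteq> W" using span_least[OF _ W] u W'W by blast
  moreover have "span (insert u W') \<noteq> W' "
    using u span_superset by blast
  moreover have "Y \<subseteq> span (insert u W')" "W' \<subseteq> span (insert u W')"
    using W'W span_superset by blast+
  ultimately have "span (insert u W') = W"
    using max[rule_format, of "span (insert u W')"] subspace_span by auto
  then show ?thesis using that W'W u by blast
qed

lemma subspace_spanning_set:
  "subspace (X::'a set) \<Longrightarrow> \<exists>B. finite B \<and> B \<subseteq> X \<and> span B = X \<and> card X = p ^ card B"
proof (induction "card X" arbitrary: X rule: less_induct)
  case less
  show ?case
  proof (cases "X = {0}")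
    case True
    have "span {} = ({0}::'a set)"
      using span_least[OF _ subspace_zero] span.span_zero by blast
    then show ?thesis using True by (intro exI[of _ "{}"]) auto
  next
    case False
    have "{0} \<subseteq> X" using subspace_0[OF less.prems] by blast
    obtain X' u where X': "subspace X'" "{0} \<subseteq> X'" "X' \<subseteq> X" "u \<in> X" "u \<notin> X'"
      "span (insert u X') = X"
      by (rule hyperplane_between[OF subspace_zero less.prems \<open>{0} \<subseteq> X\<close> False[symmetric]])
    have cX: "card X = p * card X'" using card_span_insert[OF X'(1,5)] X'(6) by simp
    moreover have "card X' > 0" using subspace_0[OF X'(1)] by (auto simp: card_gt_0_iff)
    ultimately have "card X' < card X" using p_gt1 by simp
    then obtain B where B: "finite B" "B \<subseteq> X'" "span B = X'" "card X' = p ^ card B"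
      using less.hyps X'(1) by blast
    have "insert u X' \<subseteq> span (insert u B)"
      using span_mono[of B "insert u B"] B(3) span_superset by blast
    then have "X \<subseteq> span (insert u B)" using X'(6) span_least[OF _ subspace_span] by metis
    moreover have "span (insert u B) \<subseteq> X" using span_least[OF _ less.prems] B(2) X'(3,4) by blast
    moreover have "u \<notin> B" using B(2) X'(5) by blast
    then have "card X = p ^ card (insert u B)" using B(1,4) cX by simp
    ultimately show ?thesis using B(1,2) X'(3,4) by (intro exI[of _ "insert u B"]) auto
  qed
qed

lemma card_subspace_power: "subspace (X::'a set) \<Longrightarrow> \<exists>j. card X = p ^ j"
  using subspace_spanning_set by blast

lemma fdim_le:
  assumes "subspace (X::'a set)" "card X = p ^ j"
  shows "fdim X \<le> j"
proof -
  obtain B where B: "finite B" "B \<subseteq> X" "span B = X" "card X = p ^ card B"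
    using subspace_spanning_set[OF assms(1)] by blast
  then have "card B = j" using assms(2) p_gt1 by (simp add: power_inject_exp)
  then show ?thesis unfolding fdim_def using B by (intro Least_le) blast
qed

lemma subspace_of_card:
  "subspace (H::'a set) \<Longrightarrow> card H = p ^ n \<Longrightarrow> k \<le> n \<Longrightarrow>
    \<exists>Y. subspace Y \<and> Y \<subseteq> H \<and> card Y = p ^ k"
proof (induction n arbitrary: H)
  case (Suc n)
  show ?case
  proof (cases "k = Suc n")
    case False
    have "card H > 1" using Suc.prems(2) one_less_power[OF p_gt1, of "Suc n"] by simp
    then have "H \<noteq> {0}" by auto
    have "{0} \<subseteq> H" using subspace_0[OF Suc.prems(1)] by blast
    obtain H' u where H': "subspace H'" "{0} \<subseteq> H'" "H' \<subseteq> H" "u \<in> H" "u \<notin> H'"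
      "span (insert u H') = H"
      by (rule hyperplane_between[OF subspace_zero Suc.prems(1) \<open>{0} \<subseteq> H\<close> \<open>H \<noteq> {0}\<close>[symmetric]])
    have "card H' = p ^ n"
      using card_span_insert[OF H'(1,5)] H'(6) Suc.prems(2) p_gt1 by simp
    then show ?thesis using Suc.IH[OF H'(1)] False Suc.prems(3) H'(3) by fastforce
  qed (use Suc.prems in auto)
qed auto

lemma span_insert_complement:
  assumes Y: "subspace (Y::'a set)" and W': "subspace W'" "Y \<subseteq> W'"
    and W: "subspace W" "span (insert u W') = W" and u: "u \<notin> W'"
    and C: "C \<in> complements W' Y" and y: "y \<in> Y"
  shows "span (insert (u + y) C) \<in> complements W Y" and "span (insert (u + y) C) \<inter> W' = C"
proof -
  let ?D = "span (insert (u + y) C)"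
  have sC: "subspace C" "C \<subseteq> W'" "C \<inter> Y = {0}" "ssum C Y = W'"
    using C by (auto simp: complements_def)
  have uW: "u \<in> W" "W' \<subseteq> W" using span_superset[of "insert u W'"] unfolding W(2) by auto
  have "u + y \<notin> W'" using subspace_diff[OF W'(1), of "u + y" y] y W'(2) u by auto
  then show D: "?D \<inter> W' = C" by (rule span_insert_Int_eq[OF sC(1) W'(1) sC(2)])
  have "u + y \<in> W" using subspace_add[OF W(1) uW(1)] y W'(2) uW(2) by blast
  then have DW: "?D \<subseteq> W" using sC(2) uW(2) by (intro span_least[OF _ W(1)]) auto
  have "?D \<inter> Y \<subseteq> C \<inter> Y" using D W'(2) by blast
  then have DY: "?D \<inter> Y = {0}" using sC(3) subspace_0[OF Y] subspace_0[OF subspace_span] by blast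
  have CD: "C \<subseteq> ?D" and uyD: "u + y \<in> ?D" using span_superset[of "insert (u + y) C"] by auto
  have "W' \<subseteq> ssum ?D Y" using ssum_mono1[OF CD, of Y] sC(4) by simp
  moreover have "(u + y) + - y \<in> ssum ?D Y" unfolding ssum_def using uyD subspace_neg[OF Y y] by blast
  ultimately have "insert u W' \<subseteq> ssum ?D Y" by simp
  then have "W \<subseteq> ssum ?D Y"
    unfolding W(2)[symmetric] by (rule span_least[OF _ subspace_ssum[OF subspace_span Y]])
  moreover have "ssum ?D Y \<subseteq> W" by (rule ssum_subset[OF DW _ W(1)]) (use W'(2) uW(2) in blast)
  ultimately have "ssum ?D Y = W" by (rule equalityI[rotated])
  then show "?D \<in> complements W Y"
    unfolding complements_def by (intro CollectI conjI subspace_span DW DY)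
qed

text \<open>Each complement of \<open>Y\<close> in a hyperplane \<open>W' \<supseteq> Y\<close> of \<open>W = W' + F\<^sub>p u\<close> extends to
  \<open>|Y|\<close> distinct complements in \<open>W\<close>, one for each vector \<open>u + y\<close> with \<open>y \<in> Y\<close>.\<close>
lemma card_complements:
  assumes Y: "subspace (Y::'a set)"
  shows "subspace W \<Longrightarrow> Y \<subseteq> W \<Longrightarrow> card W = p ^ k * card Y \<Longrightarrow>
    card Y ^ k \<le> card (complements W Y)"
proof (induction k arbitrary: W)
  case 0
  then have "W = Y" using card_subset_eq[of W Y] by simp
  then have "{0} \<in> complements W Y"
    unfolding complements_def ssum_def using subspace_zero subspace_0[OF Y] by auto
  then show ?case by (auto simp: Suc_le_eq card_gt_0_iff)
next
  case (Suc k)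
  have "card Y > 0" using subspace_0[OF Y] by (auto simp: card_gt_0_iff)
  then have "Y \<noteq> W" using Suc.prems(3) p_gt1 by auto
  obtain W' u where W': "subspace W'" "Y \<subseteq> W'" "W' \<subseteq> W" "u \<in> W" "u \<notin> W'"
    "span (insert u W') = W"
    by (rule hyperplane_between[OF Y Suc.prems(1,2) \<open>Y \<noteq> W\<close>])
  have "card W' = p ^ k * card Y"
    using card_span_insert[OF W'(1,5)] W'(6) Suc.prems(3) p_gt1 by simp
  then have IH: "card Y ^ k \<le> card (complements W' Y)" using Suc.IH[OF W'(1,2)] by blast
  define ext where "ext = (\<lambda>(C, y). span (insert (u + y) C))"
  note ext = span_insert_complement[OF Y W'(1,2) Suc.prems(1) W'(6,5)]
  have "inj_on ext (complements W' Y \<times> Y)"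
  proof (intro inj_onI, clarify)
    fix C y C' y'
    assume C: "C \<in> complements W' Y" "y \<in> Y" "C' \<in> complements W' Y" "y' \<in> Y"
      and eq: "ext (C, y) = ext (C', y')"
    then have "ext (C, y) \<inter> W' = ext (C', y') \<inter> W'" by simp
    then have "C = C'"
      using ext(2)[OF C(1,2)] ext(2)[OF C(3,4)] by (simp only: ext_def case_prod_conv)
    have D: "subspace (ext (C, y))" "u + y \<in> ext (C, y)" "u + y' \<in> ext (C', y')"
      by (simp_all add: ext_def span.span_base subspace_span)
    have "u + y' \<in> ext (C, y)" using eq D(3) by simp
    then have "(u + y) - (u + y') \<in> ext (C, y)" by (rule subspace_diff[OF D(1,2)])
    then have "y - y' \<in> ext (C, y)" by simp
    moreover have "y - y' \<in> Y" by (rule subspace_diff[OF Y C(2,4)])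
    moreover have "ext (C, y) \<inter> Y = {0}" using ext(1)[OF C(1,2)] by (simp add: complements_def ext_def)
    ultimately have "y - y' = 0" by blast
    then have "y = y'" by simp
    with \<open>C = C'\<close> show "C = C' \<and> y = y'" by blast
  qed
  then have "card (complements W' Y \<times> Y) \<le> card (complements W Y)"
    using ext(1) by (intro card_inj_on_le) (auto simp: ext_def)
  moreover have "card Y ^ Suc k \<le> card (complements W' Y \<times> Y)"
    using mult_le_mono1[OF IH, of "card Y"] by (simp add: card_cartesian_product)
  ultimately show ?case by linarith
qed

lemma complements_nonempty:
  assumes Y: "subspace (Y::'a set)" and W: "subspace W" and YW: "Y \<subseteq> W"
  obtains C where "C \<in> complements W Y"
proof -
  obtain a b where ab: "card Y = p ^ a" "card W = p ^ b"
    using card_subspace_power[OF Y] card_subspace_power[OF W] by blast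
  then have "a \<le> b" using card_mono[OF _ YW] p_gt1 by simp
  then have "card W = p ^ (b - a) * card Y" using ab by (simp add: power_add[symmetric])
  then have "card Y ^ (b - a) \<le> card (complements W Y)" by (rule card_complements[OF Y W YW])
  moreover have "card Y > 0" using subspace_0[OF Y] by (auto simp: card_gt_0_iff)
  ultimately have "card (complements W Y) > 0" by (meson less_le_trans zero_less_power)
  then show ?thesis using that by fastforce
qed

text \<open>A complement \<open>C\<close> in \<open>W\<close> of \<open>Y \<subseteq> H\<close> cannot lie in \<open>H\<close>, as then \<open>W = C + Y \<subseteq> H\<close>;
  taking \<open>dim Y = \<lfloor>m/2\<rfloor>\<close> maximises their number \<open>|Y|\<^bsup>m - \<lfloor>m/2\<rfloor>\<^esup> = p\<^bsup>\<delta>(m)\<^esup>\<close>.\<close>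
lemma card_subspaces_not_subset:
  assumes H: "subspace (H::'a set)" and W: "subspace W" and HW: "H \<subseteq> W"
    and cH: "card W = p * card H" and cW: "card W = p ^ m"
  shows "p ^ delta m \<le> card {S. subspace S \<and> S \<subseteq> W \<and> \<not> S \<subseteq> H}"
proof -
  obtain k where k: "card H = p ^ k" using card_subspace_power[OF H] by blast
  then have "m = Suc k" using cH cW p_gt1 by (simp add: power_inject_exp flip: power_Suc)
  then have "m div 2 \<le> k" by presburger
  then obtain Y where Y: "subspace Y" "Y \<subseteq> H" "card Y = p ^ (m div 2)"
    using subspace_of_card[OF H k] by blast
  have "card W = p ^ (m - m div 2) * card Y" using cW Y(3) by (simp flip: power_add)
  then have "card Y ^ (m - m div 2) \<le> card (complements W Y)"
    using card_complements[OF Y(1) W] Y(2) HW by blast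
  also have "\<dots> \<le> card {S. subspace S \<and> S \<subseteq> W \<and> \<not> S \<subseteq> H}"
  proof (rule card_mono)
    show "complements W Y \<subseteq> {S. subspace S \<and> S \<subseteq> W \<and> \<not> S \<subseteq> H}"
    proof
      fix C assume "C \<in> complements W Y"
      then have C: "subspace C" "C \<subseteq> W" "ssum C Y = W" by (auto simp: complements_def)
      have "\<not> C \<subseteq> H"
      proof
        assume "C \<subseteq> H"
        then have "card W \<le> card H" using ssum_subset[OF _ Y(2) H] C(3) by (intro card_mono) auto
        then show False using cH k p_gt1 by simp
      qed
      then show "C \<in> {S. subspace S \<and> S \<subseteq> W \<and> \<not> S \<subseteq> H}" using C by blast
    qed
  qed simp
  finally show ?thesis using Y(3) by (simp add: delta_eq power_mult)
qed

end

section \<open>Ideals of a nilpotent algebra\<close>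

lemma nprod_Nil [simp]: "nprod a [] = a"
  by (simp add: nprod_def)

lemma nprod_Cons [simp]: "nprod a (y # ys) = y * nprod a ys"
  by (simp add: nprod_def)

lemma nprod_mult: "nprod (b * a) xs = b * nprod a xs"
  by (induction xs) (simp_all add: algebra_simps)

lemma nprod_add: "nprod (a + b) xs = nprod a xs + nprod b xs"
  by (induction xs) (simp_all add: algebra_simps)

lemma nprod_neg: "nprod (- a) xs = - nprod a xs"
  by (induction xs) simp_all

lemma nprod_diff: "nprod (a - b) xs = nprod a xs - nprod b xs"
  by (induction xs) (simp_all add: right_diff_distrib)

lemma nprod_zero [simp]: "nprod 0 xs = 0"
  by (induction xs) simp_all

lemma is_ideal_subspace: "is_ideal I \<Longrightarrow> subspace I"
  by (simp add: is_ideal_def)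

lemma is_ideal_mult: "is_ideal I \<Longrightarrow> x \<in> I \<Longrightarrow> a * x \<in> I"
  by (simp add: is_ideal_def)

lemma is_ideal_nprod: "is_ideal I \<Longrightarrow> x \<in> I \<Longrightarrow> nprod x xs \<in> I"
  by (induction xs) (simp_all add: is_ideal_mult)

lemma is_ideal_Nset: "is_ideal (Nset k)"
  unfolding is_ideal_def subspace_def Nset_def by (simp add: nprod_add nprod_neg nprod_mult)

lemma Nset_0: "Nset 0 = {0}"
  by (auto simp: Nset_def)

lemma Nset_mono: "Nset k \<subseteq> Nset (Suc k)"
proof
  fix a assume a: "a \<in> Nset k"
  have "nprod a (y # ys) = 0" if "length ys = k" for y ys
    using a that by (simp add: Nset_def)
  then show "a \<in> Nset (Suc k)" unfolding Nset_def by (auto simp: length_Suc_conv)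
qed

definition genideal :: "'a::comm_ring set \<Rightarrow> 'a set" where
  "genideal S = \<Inter> {J. is_ideal J \<and> S \<subseteq> J}"

lemma is_ideal_genideal: "is_ideal (genideal S)"
  unfolding genideal_def is_ideal_def subspace_def by auto

lemma genideal_superset: "S \<subseteq> genideal S"
  unfolding genideal_def by auto

lemma genideal_least: "is_ideal J \<Longrightarrow> S \<subseteq> J \<Longrightarrow> genideal S \<subseteq> J"
  unfolding genideal_def by auto

definition multiples :: "'a::comm_ring \<Rightarrow> 'a set" where
  "multiples x = range (\<lambda>a. a * x)"

definition principal :: "'a::comm_ring \<Rightarrow> 'a set" where
  "principal x = span (insert x (multiples x))"

lemma qdim_eq_fdim_principal: "qdim x = fdim (principal x)"
  by (simp add: qdim_def principal_def multiples_def)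

lemma subspace_multiples: "subspace (multiples x)"
  unfolding subspace_def multiples_def
  by (auto intro: image_eqI[where x=0]) (metis distrib_right rangeI, metis mult_minus_left rangeI)

lemma principal_subset: "is_ideal I \<Longrightarrow> x \<in> I \<Longrightarrow> principal x \<subseteq> I"
  unfolding principal_def multiples_def
  by (rule span_least) (auto simp: is_ideal_mult is_ideal_subspace)

definition layer :: "('a::comm_ring set \<Rightarrow> bool) \<Rightarrow> nat \<Rightarrow> 'a set set" where
  "layer P t = {S. P S \<and> S \<subseteq> Nset t \<and> \<not> S \<subseteq> Nset (t - 1)}"

locale nilpotent_fp_ring = fp_ring p ty for p :: nat and ty :: "'a::{comm_ring,finite} itself" +
  fixes e :: nat
  assumes nprod_vanish: "\<And>(x::'a) xs. length xs = e \<Longrightarrow> nprod x xs = 0"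
begin

lemma not_mem_multiples_self:
  assumes "(x::'a) \<noteq> 0"
  shows "x \<notin> multiples x"
proof
  assume "x \<in> multiples x"
  then obtain a where "x = a * x" by (auto simp: multiples_def)
  then have "nprod x (replicate n a) = x" for n by (induction n) simp_all
  then show False using nprod_vanish[of "replicate e a" x] assms by simp
qed

text \<open>Since \<open>b\<close> acts nilpotently, \<open>x = (x - b x) + (b x - b\<^sup>2 x) + \<dots> + (b\<^sup>e\<^sup>-\<^sup>1 x - b\<^sup>e x)\<close>.\<close>
lemma ideal_mem_of_diff_mult:
  assumes J: "is_ideal J" and "x - b * x \<in> J"
  shows "(x::'a) \<in> J"
proof -
  have "x - nprod x (replicate n b) \<in> J" for n
  proof (induction n)
    case (Suc n)
    have "nprod (x - b * x) (replicate n b) \<in> J" by (rule is_ideal_nprod[OF J assms(2)])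
    then have "nprod x (replicate n b) - nprod x (replicate (Suc n) b) \<in> J"
      by (simp add: nprod_diff nprod_mult)
    from subspace_add[OF is_ideal_subspace[OF J] Suc.IH this] show ?case by simp
  qed (simp add: subspace_0[OF is_ideal_subspace[OF J]])
  from this[of e] show ?thesis using nprod_vanish[of "replicate e b" x] by simp
qed

lemma genideal_ssum_eq:
  assumes I: "is_ideal I" and x: "x \<in> I" and R: "subspace R" and RI: "ssum R (principal x) = I"
    and S: "subspace S" and SW: "S \<subseteq> principal x" and SH: "\<not> S \<subseteq> multiples x"
  shows "genideal (ssum S R) = (I::'a set)"
proof
  let ?J = "genideal (ssum S R)"
  have sI: "subspace I" using is_ideal_subspace[OF I] .
  have RI': "R \<subseteq> I" using RI ssum_upper1[OF subspace_span] unfolding principal_def by blast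
  then show "?J \<subseteq> I"
    using genideal_least[OF I] ssum_subset[of S I R] SW principal_subset[OF I x] sI by blast
  have J: "subspace ?J" using is_ideal_subspace[OF is_ideal_genideal] .
  have SJ: "S \<subseteq> ?J" and RJ: "R \<subseteq> ?J"
    using ssum_upper1[OF R] ssum_upper2[OF S] genideal_superset by blast+
  obtain y where y: "y \<in> S" "y \<notin> multiples x" using SH by blast
  then obtain h c where hc: "h \<in> multiples x" "c < p" "y = h + nsmul c x"
    using SW unfolding principal_def span_insert_eq_image[OF subspace_multiples] by auto
  then have "c \<noteq> 0" using y by (metis add.right_neutral nsmul.simps(1))
  then have "c mod p \<noteq> 0" using hc(2) by simp
  then obtain k where k: "\<And>z::'a. nsmul k (nsmul c z) = z" by (rule nsmul_inverse) auto
  obtain a where a: "h = a * x" using hc by (auto simp: multiples_def)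
  have "nsmul k y = nsmul k a * x + x" using hc a k by (simp add: nsmul_add_right nsmul_mult_left)
  then have "x - (- nsmul k a) * x \<in> ?J"
    using subspace_nsmul[OF J, of y k] y SJ by (auto simp: algebra_simps)
  then have "x \<in> ?J" by (rule ideal_mem_of_diff_mult[OF is_ideal_genideal])
  then have "principal x \<subseteq> ?J" by (rule principal_subset[OF is_ideal_genideal])
  then show "I \<subseteq> ?J" using RI RJ ssum_subset[OF _ _ J] by blast
qed

lemma card_generating_subspaces:
  assumes I: "is_ideal (I::'a set)" and x: "x \<in> I" "x \<noteq> 0"
  shows "p ^ delta (qdim x) \<le> card {S. subspace S \<and> genideal S = I}"
proof -
  let ?W = "principal x" and ?H = "multiples x"
  let ?T = "{S. subspace S \<and> S \<subseteq> ?W \<and> \<not> S \<subseteq> ?H}"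
  have W: "subspace ?W" unfolding principal_def by (rule subspace_span)
  have HW: "?H \<subseteq> ?W" unfolding principal_def using span_superset by blast
  have cW: "card ?W = p * card ?H" unfolding principal_def
    by (rule card_span_insert[OF subspace_multiples not_mem_multiples_self[OF x(2)]])
  obtain m where m: "card ?W = p ^ m" using card_subspace_power[OF W] by blast
  have "p ^ delta (qdim x) \<le> p ^ delta m"
    using fdim_le[OF W m] delta_mono p_gt1 by (simp add: qdim_eq_fdim_principal power_increasing)
  also have "\<dots> \<le> card ?T" by (rule card_subspaces_not_subset[OF subspace_multiples W HW cW m])
  also have "\<dots> \<le> card {S. subspace S \<and> genideal S = I}"
  proof -
    obtain R where "R \<in> complements I ?W"
      using complements_nonempty[OF W is_ideal_subspace[OF I] principal_subset[OF I x(1)]] .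
    then have R: "subspace R" "R \<inter> ?W = {0}" "ssum R ?W = I" by (auto simp: complements_def)
    have "inj_on (\<lambda>S. ssum S R) ?T"
      using ssum_Int_eq[OF R(1) W _ R(2)] by (intro inj_onI) (metis (no_types, lifting) mem_Collect_eq)
    moreover have "(\<lambda>S. ssum S R) ` ?T \<subseteq> {S. subspace S \<and> genideal S = I}"
      using genideal_ssum_eq[OF I x(1) R(1,3)] subspace_ssum[OF _ R(1)] by auto
    ultimately show ?thesis by (intro card_inj_on_le) auto
  qed
  finally show ?thesis .
qed

lemma card_layer_ideals_le:
  "card (layer is_ideal t :: 'a set set) * p ^ delta (qmin t TYPE('a))
    \<le> card (layer subspace t :: 'a set set)"
proof -
  let ?L = "layer is_ideal t :: 'a set set" and ?M = "layer subspace t :: 'a set set"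
  let ?F = "\<lambda>I. {S::'a set. subspace S \<and> genideal S = I}"
  have fibre: "p ^ delta (qmin t TYPE('a)) \<le> card (?F I)" if I: "I \<in> ?L" for I
  proof -
    obtain x where x: "x \<in> I" "x \<in> Nset t - Nset (t - 1)" using I by (auto simp: layer_def)
    then have "x \<noteq> 0" using subspace_0[OF is_ideal_subspace[OF is_ideal_Nset]] by blast
    have "qmin t TYPE('a) \<le> qdim x" unfolding qmin_def using x(2) by (intro Min_le) auto
    then have "p ^ delta (qmin t TYPE('a)) \<le> p ^ delta (qdim x)"
      using delta_mono p_gt1 by (simp add: power_increasing)
    also have "\<dots> \<le> card (?F I)"
      using card_generating_subspaces[OF _ x(1) \<open>x \<noteq> 0\<close>] I by (simp add: layer_def)
    finally show ?thesis .
  qed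
  have "?F I \<subseteq> ?M" if I: "I \<in> ?L" for I
  proof
    fix S assume "S \<in> ?F I"
    then have S: "subspace S" "genideal S = I" by auto
    have "S \<subseteq> Nset t" using genideal_superset[of S] S(2) I by (auto simp: layer_def)
    moreover have "\<not> S \<subseteq> Nset (t - 1)"
      using genideal_least[OF is_ideal_Nset, of S "t - 1"] S(2) I by (auto simp: layer_def)
    ultimately show "S \<in> ?M" using S(1) by (simp add: layer_def)
  qed
  then have "(\<Union>I\<in>?L. ?F I) \<subseteq> ?M" by blast
  have "card ?L * p ^ delta (qmin t TYPE('a))
      = (\<Sum>I\<in>?L. p ^ delta (qmin t TYPE('a)))" by simp
  also have "\<dots> \<le> (\<Sum>I\<in>?L. card (?F I))" using fibre by (intro sum_mono) auto
  also have "\<dots> = card (\<Union>I\<in>?L. ?F I)" by (rule card_UN_disjoint[symmetric]) auto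
  also have "\<dots> \<le> card ?M"
    using \<open>(\<Union>I\<in>?L. ?F I) \<subseteq> ?M\<close> by (intro card_mono) auto
  finally show ?thesis .
qed

lemma card_layer_ideals_le_real:
  "real (card (layer is_ideal t :: 'a set set))
    \<le> 1 / real p ^ delta (qmin t TYPE('a)) * real (card (layer subspace t :: 'a set set))"
  using card_layer_ideals_le[of t] p_gt1
  by (simp add: field_simps flip: of_nat_mult of_nat_power of_nat_le_iff)

lemma delta_qmin_one:
  assumes "e \<ge> 1" and "nprod (x::'a) xs \<noteq> 0" and "length xs = e - 1"
  shows "delta (qmin 1 TYPE('a)) = 0"
proof -
  define y where "y = nprod x xs"
  have ay: "a * y = 0" for a
    using nprod_vanish[of "a # xs" x] assms by (simp add: y_def)
  then have "y \<in> Nset 1" by (auto simp: Nset_def length_Suc_conv)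
  moreover have "y \<noteq> 0" using assms(2) by (simp add: y_def)
  ultimately have "qmin 1 TYPE('a) \<le> qdim y"
    unfolding qmin_def by (intro Min_le) (auto simp: Nset_0)
  have "multiples y = {0}" using ay by (auto simp: multiples_def)
  then have "card (principal y) = p ^ 1"
    using card_span_insert[OF subspace_multiples not_mem_multiples_self[OF \<open>y \<noteq> 0\<close>]]
    by (simp add: principal_def)
  then have "qdim y \<le> 1"
    using fdim_le[OF subspace_span] by (simp add: qdim_eq_fdim_principal principal_def)
  then have "qmin 1 TYPE('a) \<le> 1" using \<open>qmin 1 TYPE('a) \<le> qdim y\<close> by simp
  then show ?thesis by (cases "qmin 1 TYPE('a)") (auto simp: delta_def)
qed

end

section \<open>Counting layer by layer\<close>

lemma card_subsets_Nset_Suc: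
  "card {S::'a::{comm_ring,finite} set. P S \<and> S \<subseteq> Nset (Suc n)}
    = card {S. P S \<and> S \<subseteq> Nset n} + card (layer P (Suc n))"
proof -
  have "{S::'a set. P S \<and> S \<subseteq> Nset (Suc n)} = {S. P S \<and> S \<subseteq> Nset n} \<union> layer P (Suc n)"
    using Nset_mono[of n] by (auto simp: layer_def)
  moreover have "{S::'a set. P S \<and> S \<subseteq> Nset n} \<inter> layer P (Suc n) = {}"
    by (auto simp: layer_def)
  ultimately show ?thesis by (simp add: card_Un_disjoint)
qed

lemma card_subsets_Nset:
  assumes "P {0}" and "\<And>S. P S \<Longrightarrow> 0 \<in> S"
  shows "card {S::'a::{comm_ring,finite} set. P S \<and> S \<subseteq> Nset n} = 1 + (\<Sum>t=1..n. card (layer P t))"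
proof (induction n)
  case 0
  have "{S::'a set. P S \<and> S \<subseteq> Nset 0} = {{0}}" using assms by (auto simp: Nset_0)
  then show ?case by simp
qed (simp add: card_subsets_Nset_Suc)

lemma num_sub_Nset_0: "num_sub (Nset 0 :: 'a::{comm_ring,finite} set) = 1"
  using card_subsets_Nset[of subspace 0, OF subspace_zero subspace_0]
  by (simp add: num_sub_def conj_commute)

lemma num_sub_Nset_Suc:
  "num_sub (Nset (Suc n) :: 'a::{comm_ring,finite} set)
    = num_sub (Nset n :: 'a set) + card (layer subspace (Suc n) :: 'a set set)"
  using card_subsets_Nset_Suc[of subspace n] by (simp add: num_sub_def conj_commute)

lemma num_ideals_eq:
  assumes "Nset e = (UNIV :: 'a::{comm_ring,finite} set)"
  shows "num_ideals TYPE('a) = 1 + (\<Sum>t=1..e. card (layer is_ideal t :: 'a set set))"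
proof -
  have "is_ideal {0::'a}" by (simp add: is_ideal_def subspace_zero)
  moreover have "0 \<in> I" if "is_ideal (I::'a set)" for I
    using subspace_0[OF is_ideal_subspace[OF that]] .
  ultimately have "card {I::'a set. is_ideal I \<and> I \<subseteq> Nset e}
      = 1 + (\<Sum>t=1..e. card (layer is_ideal t :: 'a set set))"
    by (rule card_subsets_Nset)
  with assms show ?thesis by (simp add: num_ideals_def)
qed

lemma summation_by_parts:
  fixes a s :: "nat \<Rightarrow> real"
  shows "(\<Sum>t=1..n. (a t - a (t + 1)) * s t) + a (Suc n) * s (Suc n)
    = a 1 * s 0 + (\<Sum>t=1..Suc n. a t * (s t - s (t - 1)))"
  by (induction n) (simp_all add: algebra_simps)

lemma layer_sum_le:
  fixes a s d :: "nat \<Rightarrow> real"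
  assumes "e \<ge> 1" "a 1 = 1" "s 0 = 1" "\<And>t. t \<ge> 1 \<Longrightarrow> d t \<le> a t * (s t - s (t - 1))"
  shows "1 + (\<Sum>t=1..e. d t) \<le> (\<Sum>t=1..e-1. (a t - a (t + 1)) * s t) + a e * s e"
proof -
  have "(\<Sum>t=1..e. d t) \<le> (\<Sum>t=1..e. a t * (s t - s (t - 1)))"
    using assms(4) by (intro sum_mono) auto
  then show ?thesis using summation_by_parts[of a s "e - 1"] assms(1-3) by simp
qed

theorem corollary2p5:
  fixes p e :: nat
  assumes "prime p"
    and "char_exp p TYPE('a::{comm_ring,finite})"
    and "e \<ge> 1"
    and "\<exists>x (xs::'a list). length xs = e - 1 \<and> nprod x xs \<noteq> 0"
    and "\<forall>x (xs::'a list). length xs = e \<longrightarrow> nprod x xs = 0"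
  shows "real (num_ideals TYPE('a))
    \<le> (\<Sum>t=1..e-1. (1 / real p ^ delta (qmin t TYPE('a))
                     - 1 / real p ^ delta (qmin (t+1) TYPE('a))) * real (num_sub (Nset t :: 'a set)))
      + 1 / real p ^ delta (qmin e TYPE('a)) * real (num_sub (Nset e :: 'a set))"
proof -
  interpret nilpotent_fp_ring p "TYPE('a)" e
    using assms(1,2,5) by unfold_locales (auto simp: char_exp_def sum_const_lessThan_eq_nsmul)
  define a where "a t = 1 / real p ^ delta (qmin t TYPE('a))" for t
  define s where "s t = real (num_sub (Nset t :: 'a set))" for t
  obtain x xs where "length xs = e - 1" "nprod (x::'a) xs \<noteq> 0" using assms(4) by blast
  then have "delta (qmin 1 TYPE('a)) = 0" using delta_qmin_one[OF assms(3)] by simp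
  have "Nset e = (UNIV :: 'a set)" using assms(5) by (auto simp: Nset_def)
  then have "real (num_ideals TYPE('a)) = 1 + (\<Sum>t=1..e. real (card (layer is_ideal t :: 'a set set)))"
    by (simp add: num_ideals_eq)
  also have "\<dots> \<le> (\<Sum>t=1..e-1. (a t - a (t + 1)) * s t) + a e * s e"
  proof (rule layer_sum_le[OF assms(3)])
    show "a 1 = 1" using \<open>delta (qmin 1 TYPE('a)) = 0\<close> by (simp add: a_def)
    show "s 0 = 1" by (simp add: s_def num_sub_Nset_0)
    show "real (card (layer is_ideal t :: 'a set set)) \<le> a t * (s t - s (t - 1))" if "t \<ge> 1" for t
    proof -
      have "s t - s (t - 1) = real (card (layer subspace t :: 'a set set))"
        using num_sub_Nset_Suc[where 'a='a, of "t - 1"] that by (simp add: s_def)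
      then show ?thesis using card_layer_ideals_le_real[of t] by (simp add: a_def)
    qed
  qed
  finally show ?thesis by (simp add: a_def s_def)
qed

end
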